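(* There is a deterministic max-finding algorithm that, given $n$ elements, uses $O(n)$ comparisons and outputs an element $x$ with $x \ge x^* - \log_2\log_2 n$, where $x^*$ is the maximum value of an input element (i.e., it has error at most $\log_2\log_2 n$).
   Context: Model of imprecise comparisons: there are $n$ elements, each with a fixed unknown real value; we identify an element with its value. Asked to compare $x_i$ and $x_j$, the comparator answers either "$x_i \ge x_j$" or "$x_j \ge x_i$". If $|x_i-x_j|>1$ the answer is correct; if $|x_i-x_j|\le 1$ the answer is arbitrary (possibly adversarial and adaptive). The guarantee and comparison bound hold for every input and every comparator behaviour consistent with these rules. *)

theory Defs
  imports Complex_Main
begin

text \<open>A deterministic comparison-based algorithm on elements indexed 0..n-1 is a
decision tree. Node Compare i j t1 t2 asks the comparator about elements i and j;
answer "x_i >= x_j" continues with t1, answer "x_j >= x_i" continues with t2.\<close>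

datatype ctree = Output nat | Compare nat nat ctree ctree

fun valid_tree :: "nat \<Rightarrow> ctree \<Rightarrow> bool" where
  "valid_tree n (Output k) = (k < n)"
| "valid_tree n (Compare i j t1 t2) = (i < n \<and> j < n \<and> valid_tree n t1 \<and> valid_tree n t2)"

text \<open>Since the algorithm is deterministic, an (adaptive,
adversarial) comparator corresponds exactly to a choice of a consistent
root-to-leaf path. run x t k c: some consistent comparator behaviour makes t output
element k after exactly c comparisons.\<close>
inductive run :: "(nat \<Rightarrow> real) \<Rightarrow> ctree \<Rightarrow> nat \<Rightarrow> nat \<Rightarrow> bool" where
  run_out: "run x (Output k) k 0"
| run_ge: "\<not> (x j - x i > 1) \<Longrightarrow> run x t1 k c \<Longrightarrow> run x (Compare i j t1 t2) k (Suc c)"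
| run_le: "\<not> (x i - x j > 1) \<Longrightarrow> run x t2 k c \<Longrightarrow> run x (Compare i j t1 t2) k (Suc c)"

end

theory Submission
  imports Defs
begin

text \<open>Split the list into blocks of size \<open>2^k\<close> and play a round-robin tournament in each block,
  at cost \<open>2^k\<close> per element. A tournament on fewer than \<open>2^(k+1)\<close> players is dominated by at
  most \<open>k + 1\<close> of them (greedily take a player beating half of the others), and since an answer
  can only be wrong between values at distance at most 1, every player of a block is at most 1 above
  one of its dominators. Keeping only the dominators shrinks the list by the factor
  \<open>2^k / (k + 1)\<close>, which pays for roughly squaring the block size at the next level, so the costs
  of the levels add up to \<open>O(n)\<close>. After about \<open>log log n\<close> levels a single block remains; one
  more tournament finishes, its king (a player of maximal out-degree) being within 2 of every player.
  Each level loses at most 1.\<close>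

section \<open>Comparison programs\<close>

text \<open>Decision trees with results of arbitrary type, so that algorithms can be composed
  by \<open>bind_prog\<close>; \<open>exec\<close> is \<open>run\<close> for such programs.\<close>

datatype 'a prog = Ret 'a | Ask nat nat "'a prog" "'a prog"

primrec bind_prog :: "'a prog \<Rightarrow> ('a \<Rightarrow> 'b prog) \<Rightarrow> 'b prog" where
  "bind_prog (Ret a) f = f a"
| "bind_prog (Ask i j p q) f = Ask i j (bind_prog p f) (bind_prog q f)"

primrec tree_of_prog :: "nat prog \<Rightarrow> ctree" where
  "tree_of_prog (Ret k) = Output k"
| "tree_of_prog (Ask i j p q) = Compare i j (tree_of_prog p) (tree_of_prog q)"

inductive exec :: "(nat \<Rightarrow> real) \<Rightarrow> 'a prog \<Rightarrow> 'a \<Rightarrow> nat \<Rightarrow> bool" where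
  exec_Ret: "exec x (Ret a) a 0"
| exec_ge: "\<not> x j - x i > 1 \<Longrightarrow> exec x p a c \<Longrightarrow> exec x (Ask i j p q) a (Suc c)"
| exec_le: "\<not> x i - x j > 1 \<Longrightarrow> exec x q a c \<Longrightarrow> exec x (Ask i j p q) a (Suc c)"

lemma exec_Ret_iff [simp]: "exec x (Ret a) b c \<longleftrightarrow> b = a \<and> c = 0"
  by (auto elim: exec.cases intro: exec.intros)

lemma exec_Ask_iff: "exec x (Ask i j p q) b c \<longleftrightarrow>
    (\<exists>c'. c = Suc c' \<and> (\<not> x j - x i > 1 \<and> exec x p b c' \<or> \<not> x i - x j > 1 \<and> exec x q b c'))"
  by (auto elim: exec.cases intro: exec.intros)

inductive_cases run_OutputE: "run x (Output a) k c"
inductive_cases run_CompareE: "run x (Compare i j t1 t2) k c"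

lemma exec_tree_of_prog: "run x (tree_of_prog p) k c \<Longrightarrow> exec x p k c"
  by (induction p arbitrary: c) (auto elim!: run_OutputE run_CompareE intro: exec.intros)

lemma exec_bind_prog:
  "exec x (bind_prog p f) r c \<Longrightarrow> \<exists>a c1 c2. exec x p a c1 \<and> exec x (f a) r c2 \<and> c = c1 + c2"
proof (induction p arbitrary: c)
  case (Ret a)
  then show ?case by fastforce
next
  case (Ask i j p q)
  then obtain c' where "c = Suc c'" and
    "\<not> x j - x i > 1 \<and> exec x (bind_prog p f) r c' \<or> \<not> x i - x j > 1 \<and> exec x (bind_prog q f) r c'"
    by (auto simp: exec_Ask_iff)
  with Ask.IH show ?case
    by (metis add_Suc exec_ge exec_le)
qed

lemma exec_bind_Ret:
  "exec x (bind_prog p (\<lambda>a. Ret (f a))) r c \<Longrightarrow> \<exists>a. exec x p a c \<and> r = f a"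
  by (fastforce dest: exec_bind_prog)

primrec wf_prog :: "nat \<Rightarrow> ('a \<Rightarrow> bool) \<Rightarrow> 'a prog \<Rightarrow> bool" where
  "wf_prog n P (Ret a) = P a"
| "wf_prog n P (Ask i j p q) = (i < n \<and> j < n \<and> wf_prog n P p \<and> wf_prog n P q)"

lemma wf_prog_bind:
  "wf_prog n P p \<Longrightarrow> (\<And>a. P a \<Longrightarrow> wf_prog n Q (f a)) \<Longrightarrow> wf_prog n Q (bind_prog p f)"
  by (induction p) auto

lemma valid_tree_of_prog: "wf_prog n (\<lambda>k. k < n) p \<Longrightarrow> valid_tree n (tree_of_prog p)"
  by (induction p) auto

section \<open>Round-robin tournaments\<close>

text \<open>The result of \<open>ask i j\<close> is the pair (winner, loser).\<close>

definition ask :: "nat \<Rightarrow> nat \<Rightarrow> (nat \<times> nat) prog" where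
  "ask i j = Ask i j (Ret (i, j)) (Ret (j, i))"

primrec ask_all :: "(nat \<times> nat) list \<Rightarrow> (nat \<times> nat) list prog" where
  "ask_all [] = Ret []"
| "ask_all (e # P) = bind_prog (ask (fst e) (snd e)) (\<lambda>w. bind_prog (ask_all P) (\<lambda>R. Ret (w # R)))"

definition consistent :: "(nat \<Rightarrow> real) \<Rightarrow> (nat \<times> nat) list \<Rightarrow> bool" where
  "consistent x R \<longleftrightarrow> (\<forall>(a, b) \<in> set R. x b \<le> x a + 1)"

lemma consistent_simps [simp]:
  "consistent x []"
  "consistent x (e # R) \<longleftrightarrow> x (snd e) \<le> x (fst e) + 1 \<and> consistent x R"
  "consistent x (R @ R') \<longleftrightarrow> consistent x R \<and> consistent x R'"
  by (auto simp: consistent_def)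

lemma exec_ask:
  "exec x (ask i j) e c \<Longrightarrow> c = 1 \<and> (e = (i, j) \<or> e = (j, i)) \<and> consistent x [e]"
  by (auto simp: ask_def exec_Ask_iff)

lemma exec_ask_all:
  "exec x (ask_all P) R c \<Longrightarrow>
    c = length P \<and> consistent x R \<and> (\<forall>(a, b) \<in> set P. (a, b) \<in> set R \<or> (b, a) \<in> set R)"
proof (induction P arbitrary: R c)
  case (Cons e P)
  then obtain w c1 R' c2 where "exec x (ask (fst e) (snd e)) w c1" "exec x (ask_all P) R' c2"
    "R = w # R'" "c = c1 + c2"
    by (auto dest!: exec_bind_prog)
  with Cons.IH show ?case
    by (fastforce dest!: exec_ask)
qed simp

primrec pairs :: "'a list \<Rightarrow> ('a \<times> 'a) list" where
  "pairs [] = []"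
| "pairs (a # L) = map (Pair a) L @ pairs L"

lemma length_pairs_le: "length (pairs L) \<le> (length L)\<^sup>2"
  by (induction L) (auto simp: power2_eq_square)

lemma pairs_complete:
  "a \<in> set L \<Longrightarrow> b \<in> set L \<Longrightarrow> a \<noteq> b \<Longrightarrow> (a, b) \<in> set (pairs L) \<or> (b, a) \<in> set (pairs L)"
  by (induction L) auto

lemma set_pairs_subset: "set (pairs L) \<subseteq> set L \<times> set L"
  by (induction L) auto

definition round_robin :: "nat list \<Rightarrow> (nat \<times> nat) list prog" where
  "round_robin L = ask_all (pairs L)"

definition tournament_on :: "'a set \<Rightarrow> ('a \<Rightarrow> 'a \<Rightarrow> bool) \<Rightarrow> bool" where
  "tournament_on V T \<longleftrightarrow> (\<forall>a\<in>V. \<forall>b\<in>V. a \<noteq> b \<longrightarrow> T a b \<or> T b a)"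

abbreviation beats :: "(nat \<times> nat) list \<Rightarrow> nat \<Rightarrow> nat \<Rightarrow> bool" where
  "beats R a b \<equiv> (a, b) \<in> set R"

lemma exec_round_robin:
  "exec x (round_robin L) R c \<Longrightarrow>
    c \<le> (length L)\<^sup>2 \<and> consistent x R \<and> tournament_on (set L) (beats R)"
  unfolding round_robin_def tournament_on_def
  using length_pairs_le pairs_complete by (fastforce dest!: exec_ask_all)

lemma wf_ask_all: "set P \<subseteq> {..<n} \<times> {..<n} \<Longrightarrow> wf_prog n (\<lambda>_. True) (ask_all P)"
  by (induction P) (auto simp: ask_def intro!: wf_prog_bind)

lemma wf_round_robin: "set L \<subseteq> {..<n} \<Longrightarrow> wf_prog n (\<lambda>_. True) (round_robin L)"
  unfolding round_robin_def using set_pairs_subset by (blast intro: wf_ask_all)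

section \<open>Kings and dominating sets of tournaments\<close>

definition out_degree :: "('a \<Rightarrow> 'a \<Rightarrow> bool) \<Rightarrow> 'a set \<Rightarrow> 'a \<Rightarrow> nat" where
  "out_degree T V v = card {u \<in> V. u \<noteq> v \<and> T v u}"

lemma arg_max_out_degree:
  fixes T :: "'a \<Rightarrow> 'a \<Rightarrow> bool"
  assumes "finite V" "V \<noteq> {}"
  defines "r \<equiv> arg_max_on (out_degree T V) V"
  shows "r \<in> V \<and> (\<forall>u\<in>V. out_degree T V u \<le> out_degree T V r)"
proof -
  have "\<forall>u. u \<in> V \<longrightarrow> out_degree T V u < Suc (card V)"
    unfolding out_degree_def using assms(1) by (simp add: card_mono le_imp_less_Suc)
  then show ?thesis
    using arg_max_nat_lemma[of "\<lambda>u. u \<in> V"] assms(2) unfolding r_def arg_max_on_def by blast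
qed

lemma tournament_out_degree_sum:
  assumes fin: "finite V" and tour: "tournament_on V T"
  shows "card V * (card V - 1) \<le> 2 * (\<Sum>v\<in>V. out_degree T V v)"
proof -
  define P where "P = Sigma V (\<lambda>a. {u \<in> V. u \<noteq> a \<and> T a u})"
  have "Sigma V (\<lambda>a. V - {a}) \<subseteq> P \<union> prod.swap ` P"
  proof
    fix e assume "e \<in> Sigma V (\<lambda>a. V - {a})"
    then obtain a b where "e = (a, b)" "a \<in> V" "b \<in> V" "a \<noteq> b" by auto
    with tour show "e \<in> P \<union> prod.swap ` P"
      unfolding P_def tournament_on_def by (auto intro: image_eqI[where x = "(b, a)"])
  qed
  then have "card (Sigma V (\<lambda>a. V - {a})) \<le> card (P \<union> prod.swap ` P)"
    by (intro card_mono) (auto simp: P_def fin)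
  also have "\<dots> \<le> card P + card (prod.swap ` P)" by (rule card_Un_le)
  also have "\<dots> \<le> 2 * card P" using card_image_le[of P prod.swap] by (simp add: P_def fin)
  finally show ?thesis
    using fin by (simp add: P_def card_SigmaI out_degree_def)
qed

lemma tournament_max_out_degree_ge:
  assumes fin: "finite V" and tour: "tournament_on V T" and "r \<in> V"
    and max: "\<forall>u\<in>V. out_degree T V u \<le> out_degree T V r"
  shows "card V \<le> 2 * out_degree T V r + 1"
proof -
  have "card V * (card V - 1) \<le> 2 * (\<Sum>v\<in>V. out_degree T V v)"
    using tournament_out_degree_sum[OF fin tour] .
  also have "\<dots> \<le> card V * (2 * out_degree T V r)"
    using sum_bounded_above[of V "out_degree T V" "out_degree T V r"] max by simp
  finally have "card V - 1 \<le> 2 * out_degree T V r"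
    using \<open>r \<in> V\<close> fin card_gt_0_iff by (metis mult_le_cancel1 empty_iff)
  then show ?thesis by simp
qed

text \<open>If \<open>r\<close> neither beats \<open>v\<close> nor beats a vertex beating \<open>v\<close>, then \<open>v\<close> beats \<open>r\<close>
  and everything \<open>r\<close> beats.\<close>

lemma tournament_max_out_degree_king:
  assumes fin: "finite V" and tour: "tournament_on V T" and r: "r \<in> V"
    and max: "\<forall>u\<in>V. out_degree T V u \<le> out_degree T V r" and v: "v \<in> V"
  shows "v = r \<or> T r v \<or> (\<exists>u\<in>V. T r u \<and> T u v)"
proof (rule ccontr)
  assume no_path: "\<not> ?thesis"
  then have "v \<noteq> r" "\<not> T r v" by auto
  have beats_v: "T v u" if "u \<in> V" "u \<noteq> v" "\<not> T u v" for u
    using tour that v unfolding tournament_on_def by blast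
  let ?out = "\<lambda>w. {u \<in> V. u \<noteq> w \<and> T w u}"
  have "insert r (?out r) \<subseteq> ?out v"
  proof
    fix u assume "u \<in> insert r (?out r)"
    then consider "u = r" | "u \<in> V" "u \<noteq> r" "T r u" by blast
    then show "u \<in> ?out v"
    proof cases
      case 1
      then show ?thesis using r beats_v \<open>v \<noteq> r\<close> \<open>\<not> T r v\<close> by auto
    next
      case 2
      then have "u \<noteq> v" "\<not> T u v" using \<open>\<not> T r v\<close> no_path by auto
      then show ?thesis using 2 beats_v by auto
    qed
  qed
  then have "card (insert r (?out r)) \<le> card (?out v)"
    using fin by (intro card_mono) auto
  then have "Suc (out_degree T V r) \<le> out_degree T V v"
    using fin unfolding out_degree_def by simp
  then show False using max v by fastforce
qed

definition dominates :: "('a \<Rightarrow> 'a \<Rightarrow> bool) \<Rightarrow> 'a set \<Rightarrow> 'a set \<Rightarrow> bool" where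
  "dominates T K V \<longleftrightarrow> (\<forall>v\<in>V. v \<in> K \<or> (\<exists>u\<in>K. T u v))"

lemma tournament_dominating_set:
  "finite V \<Longrightarrow> tournament_on V T \<Longrightarrow> card V < 2 ^ k \<Longrightarrow>
    \<exists>K\<subseteq>V. card K \<le> k \<and> dominates T K V"
proof (induction k arbitrary: V)
  case 0
  then show ?case by (auto simp: dominates_def)
next
  case (Suc k)
  show ?case
  proof (cases "V = {}")
    case True
    then show ?thesis by (auto simp: dominates_def)
  next
    case False
    define r where "r = arg_max_on (out_degree T V) V"
    have r: "r \<in> V" "\<forall>u\<in>V. out_degree T V u \<le> out_degree T V r"
      using arg_max_out_degree[OF Suc.prems(1) False] unfolding r_def by blast+
    define U where "U = {u \<in> V. u \<noteq> r \<and> \<not> T r u}"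
    have "U \<union> {u \<in> V. u \<noteq> r \<and> T r u} = V - {r}"
      unfolding U_def by auto
    then have "card U + out_degree T V r = card V - 1"
      using Suc.prems(1) r(1) unfolding out_degree_def
      by (subst card_Un_disjoint[symmetric]) (auto simp: U_def)
    then have "card U < 2 ^ k"
      using tournament_max_out_degree_ge[OF Suc.prems(1,2) r] Suc.prems(3) by simp
    moreover have "tournament_on U T" "finite U"
      using Suc.prems(1,2) unfolding U_def tournament_on_def by auto
    ultimately obtain K where K: "K \<subseteq> U" "card K \<le> k" "dominates T K U"
      using Suc.IH by blast
    have "card (insert r K) \<le> Suc k"
      using K(2) finite_subset[OF K(1) \<open>finite U\<close>] by (simp add: card_insert_if)
    moreover have "dominates T (insert r K) V"
      using K(3) unfolding dominates_def U_def by blast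
    ultimately show ?thesis using K(1) r(1) unfolding U_def by blast
  qed
qed

section \<open>The algorithm\<close>

text \<open>Filtering \<open>L\<close> through the chosen set keeps the result inside \<open>L\<close> even where the
  choice is unconstrained, i.e.\ when no small dominating set exists.\<close>

definition dominators :: "nat \<Rightarrow> (nat \<times> nat) list \<Rightarrow> nat list \<Rightarrow> nat list" where
  "dominators k R L =
    (let K = SOME K. K \<subseteq> set L \<and> card K \<le> Suc k \<and> dominates (beats R) K (set L)
     in remdups (filter (\<lambda>v. v \<in> K) L))"

lemma set_dominators_subset: "set (dominators k R L) \<subseteq> set L"
  by (auto simp: dominators_def Let_def)

lemma length_dominators_le: "length (dominators k R L) \<le> length L"
  unfolding dominators_def Let_def by (rule order_trans[OF length_remdups_leq length_filter_le])

lemma dominators_spec: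
  assumes "tournament_on (set L) (beats R)" "length L \<le> 2 ^ k"
  shows "length (dominators k R L) \<le> Suc k \<and> dominates (beats R) (set (dominators k R L)) (set L)"
proof -
  let ?good = "\<lambda>K. K \<subseteq> set L \<and> card K \<le> Suc k \<and> dominates (beats R) K (set L)"
  have "card (set L) < 2 ^ Suc k"
    using card_length[of L] assms(2) by (simp add: order_le_less_trans)
  then have "\<exists>K. ?good K"
    using tournament_dominating_set[OF _ assms(1)] by blast
  define K where "K = (SOME K. ?good K)"
  then have good: "?good K"
    using someI_ex[OF \<open>\<exists>K. ?good K\<close>] by simp
  have "dominators k R L = remdups (filter (\<lambda>v. v \<in> K) L)"
    unfolding dominators_def K_def by simp
  moreover have "set (remdups (filter (\<lambda>v. v \<in> K) L)) = K"
    using good by auto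
  ultimately show ?thesis
    using good by (simp add: length_remdups_card_conv)
qed

lemma dominates_consistent:
  "consistent x R \<Longrightarrow> dominates (beats R) K V \<Longrightarrow> v \<in> V \<Longrightarrow> \<exists>u\<in>K. x v \<le> x u + 1"
  unfolding dominates_def consistent_def by (metis case_prodD less_eq_real_def less_add_one)

fun blocks :: "nat \<Rightarrow> 'a list \<Rightarrow> 'a list list" where
  "blocks k [] = []"
| "blocks k (a # L) = take (2 ^ k) (a # L) # blocks k (drop (2 ^ k) (a # L))"

lemma concat_blocks [simp]: "concat (blocks k L) = L"
  by (induction k L rule: blocks.induct) auto

lemma set_in_blocks_subset: "B \<in> set (blocks k L) \<Longrightarrow> set B \<subseteq> set L"
  using concat_blocks[of k L] by (metis UN_upper set_concat)

lemma length_in_blocks_le: "B \<in> set (blocks k L) \<Longrightarrow> length B \<le> 2 ^ k"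
  by (induction k L rule: blocks.induct) auto

lemma length_blocks_mult_less: "length (blocks k L) * 2 ^ k < length L + 2 ^ k"
proof (induction k L rule: blocks.induct)
  case (2 k a L)
  then show ?case
    by (cases "2 ^ k \<le> Suc (length L)") (auto simp: algebra_simps)
qed simp

primrec reduce_blocks :: "nat \<Rightarrow> nat list list \<Rightarrow> nat list prog" where
  "reduce_blocks k [] = Ret []"
| "reduce_blocks k (B # Bs) = bind_prog (round_robin B)
     (\<lambda>R. bind_prog (reduce_blocks k Bs) (\<lambda>S. Ret (dominators k R B @ S)))"

lemma exec_reduce_blocks:
  "exec x (reduce_blocks k Bs) S c \<Longrightarrow> \<forall>B\<in>set Bs. length B \<le> 2 ^ k \<Longrightarrow>
    c \<le> 2 ^ k * length (concat Bs) \<and> length S \<le> length Bs * Suc k \<and>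
    length S \<le> length (concat Bs) \<and> set S \<subseteq> set (concat Bs) \<and>
    (\<forall>v\<in>set (concat Bs). \<exists>u\<in>set S. x v \<le> x u + 1)"
proof (induction Bs arbitrary: S c)
  case (Cons B Bs)
  then obtain R c1 S' c2 where RR: "exec x (round_robin B) R c1"
    and IH: "exec x (reduce_blocks k Bs) S' c2"
    and S: "S = dominators k R B @ S'" and c: "c = c1 + c2"
    by (auto dest!: exec_bind_prog)
  have B: "length B \<le> 2 ^ k" using Cons.prems(2) by simp
  note tour = exec_round_robin[OF RR]
  note D = dominators_spec[OF conjunct2[OF conjunct2[OF tour]] B]
  note IH = Cons.IH[OF IH] and D_sub = set_dominators_subset[of k R B]
  have "c1 \<le> length B * length B" using tour by (simp add: power2_eq_square)
  also have "\<dots> \<le> 2 ^ k * length B" using B by simp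
  finally have "c \<le> 2 ^ k * length (concat (B # Bs))"
    using IH Cons.prems(2) c by (simp add: algebra_simps)
  moreover have "\<forall>v\<in>set B. \<exists>u\<in>set (dominators k R B). x v \<le> x u + 1"
    using tour D dominates_consistent by blast
  then have "\<forall>v\<in>set (concat (B # Bs)). \<exists>u\<in>set S. x v \<le> x u + 1"
    using IH Cons.prems(2) S by fastforce
  ultimately show ?case
    using IH Cons.prems(2) D S D_sub length_dominators_le[of k R B] by auto
qed simp

lemma wf_reduce_blocks:
  "\<forall>B\<in>set Bs. set B \<subseteq> {..<n} \<Longrightarrow> wf_prog n (\<lambda>S. set S \<subseteq> {..<n}) (reduce_blocks k Bs)"
proof (induction Bs)
  case (Cons B Bs)
  have "set (dominators k R B) \<subseteq> {..<n}" for R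
    using Cons.prems set_dominators_subset[of k R B] by auto
  with Cons show ?case
    by (auto intro!: wf_prog_bind[OF wf_round_robin] wf_prog_bind[where P = "\<lambda>S. set S \<subseteq> {..<n}"])
qed simp

text \<open>The value 0 for the empty list only serves to keep the output a valid index.\<close>

definition king :: "(nat \<times> nat) list \<Rightarrow> nat list \<Rightarrow> nat" where
  "king R L = (if L = [] then 0 else arg_max_on (out_degree (beats R) (set L)) (set L))"

definition play_tournament :: "nat list \<Rightarrow> nat prog" where
  "play_tournament L = bind_prog (round_robin L) (\<lambda>R. Ret (king R L))"

lemma exec_play_tournament:
  assumes "exec x (play_tournament L) r c" "L \<noteq> []"
  shows "c \<le> (length L)\<^sup>2 \<and> r \<in> set L \<and> (\<forall>v\<in>set L. x v \<le> x r + 2)"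
proof -
  obtain R where RR: "exec x (round_robin L) R c" and r: "r = king R L"
    using exec_bind_Ret[of x "round_robin L" "\<lambda>R. king R L"] assms(1)
    unfolding play_tournament_def by blast
  have cost: "c \<le> (length L)\<^sup>2" and cons: "consistent x R"
    and tour: "tournament_on (set L) (beats R)"
    using exec_round_robin[OF RR] by auto
  have max: "r \<in> set L" "\<forall>u\<in>set L. out_degree (beats R) (set L) u \<le> out_degree (beats R) (set L) r"
    using arg_max_out_degree[of "set L"] assms(2) unfolding r king_def by auto
  have "x v \<le> x r + 2" if "v \<in> set L" for v
  proof -
    from tournament_max_out_degree_king[OF _ tour max that]
    consider "v = r" | "beats R r v" | u where "beats R r u" "beats R u v" by auto
    then show ?thesis
    proof cases
      case 3
      then have "x u \<le> x r + 1" "x v \<le> x u + 1" using cons unfolding consistent_def by auto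
      then show ?thesis by simp
    qed (use cons in \<open>auto simp: consistent_def\<close>)
  qed
  with cost max show ?thesis by blast
qed

lemma wf_play_tournament: "set L \<subseteq> {..<n} \<Longrightarrow> 0 < n \<Longrightarrow> wf_prog n (\<lambda>r. r < n) (play_tournament L)"
  unfolding play_tournament_def
proof (rule wf_prog_bind[OF wf_round_robin])
  assume "set L \<subseteq> {..<n}" "0 < n"
  then show "wf_prog n (\<lambda>r. r < n) (Ret (king R L))" for R
    using arg_max_out_degree[of "set L" "beats R"] unfolding king_def by auto
qed

text \<open>Blocks at level \<open>j\<close> have size \<open>2 ^ block_exp j\<close>; the exponent roughly doubles per
  level, which is what the shrink factor of a level pays for (\<open>block_exp_Suc_le\<close>).\<close>

definition block_exp :: "nat \<Rightarrow> nat" where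
  "block_exp j = 2 ^ (j + 3) + 2 * j + 9"

lemma less_two_power_block_exp: "j < 2 ^ block_exp j"
proof -
  have "j < 2 ^ j" by (rule less_exp)
  also have "(2::nat) ^ j \<le> 2 ^ block_exp j" by (intro power_increasing) (auto simp: block_exp_def)
  finally show ?thesis .
qed

lemma block_exp_Suc_le: "4 * (block_exp j + 1) * 2 ^ block_exp (Suc j) \<le> 2 ^ block_exp j * 2 ^ block_exp j"
proof -
  define a :: nat where "a = 2 ^ j"
  have "j < a" "1 \<le> a" unfolding a_def by (simp_all add: less_exp)
  have "4 * (block_exp j + 1) = 32 * a + 8 * j + 40"
    unfolding block_exp_def a_def by (simp add: power_add)
  also have "\<dots> \<le> 80 * a" using \<open>j < a\<close> \<open>1 \<le> a\<close> by linarith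
  also have "\<dots> \<le> 128 * a * a" using \<open>1 \<le> a\<close> by simp
  also have "\<dots> = (2::nat) ^ (2 * j + 7)"
    unfolding a_def by (simp only: mult_2 power_add) simp
  finally have "4 * (block_exp j + 1) * 2 ^ block_exp (Suc j) \<le> 2 ^ (2 * j + 7 + block_exp (Suc j))"
    by (simp add: power_add)
  also have "2 * j + 7 + block_exp (Suc j) = block_exp j + block_exp j"
    unfolding block_exp_def by (simp add: power_add)
  finally show ?thesis by (simp add: power_add)
qed

lemma reduction_cost_le:
  assumes "s \<le> b * Suc (block_exp j)" "b * 2 ^ block_exp j \<le> 2 * m"
  shows "2 * s * 2 ^ block_exp (Suc j) \<le> m * 2 ^ block_exp j"
proof -
  let ?g = "2 ^ block_exp j :: nat" and ?g' = "2 ^ block_exp (Suc j) :: nat"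
  have "2 * s * ?g' * ?g \<le> 2 * (b * Suc (block_exp j)) * ?g' * ?g"
    using assms(1) by simp
  also have "\<dots> = 2 * (b * ?g) * Suc (block_exp j) * ?g'"
    by (simp only: ac_simps)
  also have "\<dots> \<le> 2 * (2 * m) * Suc (block_exp j) * ?g'"
    using assms(2) by (intro mult_right_mono) simp_all
  also have "\<dots> = m * (4 * (block_exp j + 1) * ?g')"
    by (simp add: algebra_simps)
  also have "\<dots> \<le> m * (?g * ?g)"
    using block_exp_Suc_le[of j] by (rule mult_le_mono2)
  finally show ?thesis
    by (simp add: mult.assoc)
qed

text \<open>\<open>f\<close> is fuel and \<open>j\<close> the level. With the invariant \<open>length L \<le> j + f\<close> the fuel
  never runs out: at \<open>f = 0\<close> the list already fits into one block (\<open>less_two_power_block_exp\<close>).\<close>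

primrec find_max :: "nat \<Rightarrow> nat \<Rightarrow> nat list \<Rightarrow> nat prog" where
  "find_max 0 j L = play_tournament L"
| "find_max (Suc f) j L =
     (if length L \<le> 2 ^ block_exp j then play_tournament L
      else bind_prog (reduce_blocks (block_exp j) (blocks (block_exp j) L)) (find_max f (Suc j)))"

lemma exec_play_tournament_small:
  assumes "exec x (play_tournament L) r c" "L \<noteq> []" "length L \<le> 2 ^ block_exp j"
  shows "c \<le> 2 * length L * 2 ^ block_exp j \<and> r \<in> set L \<and>
    (\<forall>t. length L \<le> 2 ^ block_exp (j + t) \<longrightarrow> (\<forall>v\<in>set L. x v \<le> x r + real t + 2))"
proof -
  note T = exec_play_tournament[OF assms(1,2)]
  have "c \<le> length L * length L" using T by (simp add: power2_eq_square)
  also have "\<dots> \<le> 2 * length L * 2 ^ block_exp j" using assms(3) by simp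
  finally have "c \<le> 2 * length L * 2 ^ block_exp j" .
  moreover have "x v \<le> x r + real t + 2" if "v \<in> set L" for v t
    using T that by (smt (verit) of_nat_0_le_iff)
  ultimately show ?thesis using T by simp
qed

lemma exec_find_max:
  "exec x (find_max f j L) r c \<Longrightarrow> length L \<le> j + f \<Longrightarrow> L \<noteq> [] \<Longrightarrow>
    c \<le> 2 * length L * 2 ^ block_exp j \<and> r \<in> set L \<and>
    (\<forall>t. length L \<le> 2 ^ block_exp (j + t) \<longrightarrow> (\<forall>v\<in>set L. x v \<le> x r + real t + 2))"
proof (induction f arbitrary: j L r c)
  case 0
  then have "length L \<le> 2 ^ block_exp j"
    using less_two_power_block_exp[of j] by simp
  with 0 show ?case
    using exec_play_tournament_small by simp
next
  case (Suc f)
  show ?case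
  proof (cases "length L \<le> 2 ^ block_exp j")
    case True
    with Suc.prems show ?thesis
      using exec_play_tournament_small by simp
  next
    case False
    let ?k = "block_exp j" and ?m = "length L"
    obtain S c1 c2 where red: "exec x (reduce_blocks ?k (blocks ?k L)) S c1"
      and rec: "exec x (find_max f (Suc j) S) r c2" and c: "c = c1 + c2"
      using Suc.prems(1) False by (auto dest: exec_bind_prog)
    have "\<forall>B\<in>set (blocks ?k L). length B \<le> 2 ^ ?k"
      using length_in_blocks_le by blast
    note R = exec_reduce_blocks[OF red this, unfolded concat_blocks]
    have "S \<noteq> []" using R Suc.prems(3) by (cases L) auto
    note IH = Suc.IH[OF rec _ this]
    have S_le: "length S \<le> Suc j + f" using R Suc.prems(2) by simp
    have "length (blocks ?k L) * 2 ^ ?k \<le> 2 * ?m"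
      using length_blocks_mult_less[of ?k L] False by simp
    then have "2 * length S * 2 ^ block_exp (Suc j) \<le> ?m * 2 ^ ?k"
      using R reduction_cost_le by blast
    then have cost: "c \<le> 2 * ?m * 2 ^ ?k"
      using IH[OF S_le] R c by (simp add: algebra_simps)
    have "x v \<le> x r + real t + 2" if len: "?m \<le> 2 ^ block_exp (j + t)" and v: "v \<in> set L" for t v
    proof -
      have "t \<noteq> 0" using len False by (metis add_0_right)
      then obtain t' where t': "t = Suc t'" using not0_implies_Suc by blast
      obtain u where "u \<in> set S" "x v \<le> x u + 1" using R v by blast
      moreover have "length S \<le> 2 ^ block_exp (Suc j + t')" using R len t' by simp
      ultimately show ?thesis using IH[OF S_le] t' by fastforce
    qed
    then show ?thesis using cost IH[OF S_le] R by auto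
  qed
qed

lemma wf_find_max: "set L \<subseteq> {..<n} \<Longrightarrow> 0 < n \<Longrightarrow> wf_prog n (\<lambda>r. r < n) (find_max f j L)"
proof (induction f arbitrary: j L)
  case (Suc f)
  have "\<forall>B\<in>set (blocks (block_exp j) L). set B \<subseteq> {..<n}"
    using Suc.prems(1) set_in_blocks_subset by blast
  with Suc show ?case
    by (auto simp: wf_play_tournament intro!: wf_prog_bind[OF wf_reduce_blocks])
qed (simp add: wf_play_tournament)

lemma block_level_for_size:
  assumes "16 \<le> n"
  shows "\<exists>t. n \<le> 2 ^ block_exp t \<and> real t + 2 \<le> log 2 (log 2 (real n))"
proof -
  define l where "l = log 2 (log 2 (real n))"
  have "4 \<le> log 2 (real n)"
    using le_log2_of_power[of 4 n] assms by simp
  then have "2 \<le> l"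
    using le_log_of_power[of 2 2 "log 2 (real n)"] unfolding l_def by simp
  define t where "t = nat \<lfloor>l\<rfloor> - 2"
  have t: "real t + 2 \<le> l" "l < real t + 3"
    using \<open>2 \<le> l\<close> unfolding t_def by linarith+
  have "log 2 (real n) < 2 powr (real t + 3)"
    using t(2) \<open>4 \<le> log 2 (real n)\<close> unfolding l_def by (simp add: log_less_iff)
  also have "\<dots> = real (2 ^ (t + 3))"
    by (simp add: powr_realpow[symmetric])
  finally have "real n < 2 powr real (2 ^ (t + 3))"
    using assms by (simp add: log_less_iff)
  also have "\<dots> = real (2 ^ 2 ^ (t + 3))"
    using powr_realpow[of 2 "2 ^ (t + 3)"] by simp
  finally have "n < 2 ^ 2 ^ (t + 3)"
    by (simp only: of_nat_less_iff)
  also have "(2::nat) ^ 2 ^ (t + 3) \<le> 2 ^ block_exp t"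
    by (intro power_increasing) (auto simp: block_exp_def)
  finally show ?thesis
    using t(1) unfolding l_def by (intro exI[of _ t]) simp
qed

theorem mainTheorem7:
  shows "\<exists>A :: nat \<Rightarrow> ctree. \<exists>C :: real. \<exists>N :: nat.
           \<forall>n \<ge> N. valid_tree n (A n) \<and>
             (\<forall>x :: nat \<Rightarrow> real. \<forall>k c. run x (A n) k c \<longrightarrow>
               real c \<le> C * real n \<and>
               x k \<ge> (MAX i\<in>{..<n}. x i) - log 2 (log 2 (real n)))"
proof (intro exI allI impI conjI)
  fix n :: nat assume n: "16 \<le> n"
  show "valid_tree n (tree_of_prog (find_max n 0 [0..<n]))"
    using n by (intro valid_tree_of_prog wf_find_max) auto
  fix x k c assume run: "run x (tree_of_prog (find_max n 0 [0..<n])) k c"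
  have spec: "c \<le> 2 * n * 2 ^ block_exp 0 \<and>
      (\<forall>t. n \<le> 2 ^ block_exp t \<longrightarrow> (\<forall>v<n. x v \<le> x k + real t + 2))"
    using exec_find_max[OF exec_tree_of_prog[OF run]] n by simp
  then show "real c \<le> 2 ^ 18 * real n"
    unfolding block_exp_def by simp
  obtain t where "n \<le> 2 ^ block_exp t" "real t + 2 \<le> log 2 (log 2 (real n))"
    using block_level_for_size[OF n] by blast
  moreover have "(MAX i\<in>{..<n}. x i) \<in> x ` {..<n}"
    using n by (intro Max_in) (auto simp: lessThan_empty_iff)
  then obtain i where "i < n" "(MAX i\<in>{..<n}. x i) = x i"
    by auto
  ultimately show "x k \<ge> (MAX i\<in>{..<n}. x i) - log 2 (log 2 (real n))"
    using spec by fastforce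
qed

end
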